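(* Let $(G,\lambda)$ and $(G',\lambda')$ be finite abelian $2$-groups with nonsingular symmetric linking pairings and $k\ge1$. If the layer forms $b_k$ of both are alternating, then the layer form $b_k$ of the orthogonal sum $(G\oplus G',\lambda\oplus\lambda')$ is alternating and $u_k(G\oplus G',\lambda\oplus\lambda')\equiv u_k(G,\lambda)+u_k(G',\lambda')\pmod 8$.
   Context: $G_k=\{x\in G:2^kx=0\}$, $P_k(G)=G_k/(G_{k-1}+2G_{k+1})$ with $\mathbb F_2$-form $b_k(\bar x,\bar y)=2^k\lambda(x,y)\bmod 2$. When $b_k$ is alternating, $q_k:H_k(G)=G/G_k\to\mathbb Q/\mathbb Z$, $q_k(\bar x)=2^{k-1}\lambda(x,x)$, is well defined, $\gamma_k=|H_k(G)|^{-1/2}\sum_{\bar x\in H_k(G)}\exp(2\pi iq_k(\bar x))$ is an eighth root of unity, and $u_k\in\mathbb Z/8$ is defined by $\gamma_k=\exp(\pi i u_k/4)$. *)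

theory Defs
  imports "HOL-Analysis.Analysis" "HOL-Library.Product_Plus"
begin

text \<open>Finite abelian groups are modelled as finite types of class ab_group_add
(the group is the whole type).  Values in Q/Z are represented by rationals
taken modulo the integers.\<close>

definition nmul :: "nat \<Rightarrow> 'a::ab_group_add \<Rightarrow> 'a" where
  "nmul n x = (\<Sum>i<n. x)"

definition two_group :: "'a::{finite,ab_group_add} itself \<Rightarrow> bool" where
  "two_group _ \<longleftrightarrow> (\<forall>x::'a. \<exists>n. nmul (2^n) x = 0)"

definition linking_pairing :: "('a::{finite,ab_group_add} \<Rightarrow> 'a \<Rightarrow> rat) \<Rightarrow> bool" where
  "linking_pairing lam \<longleftrightarrow>
     (\<forall>x y z. lam (x + y) z - lam x z - lam y z \<in> \<int>) \<and>
     (\<forall>x y z. lam x (y + z) - lam x y - lam x z \<in> \<int>) \<and>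
     (\<forall>x y. lam x y - lam y x \<in> \<int>) \<and>
     (\<forall>x. (\<forall>y. lam x y \<in> \<int>) \<longrightarrow> x = 0)"

definition orth_sum ::
  "('a \<Rightarrow> 'a \<Rightarrow> rat) \<Rightarrow> ('b \<Rightarrow> 'b \<Rightarrow> rat) \<Rightarrow> ('a \<times> 'b) \<Rightarrow> ('a \<times> 'b) \<Rightarrow> rat" where
  "orth_sum lam lam' = (\<lambda>(x, x') (y, y'). lam x y + lam' x' y')"

definition Gk :: "nat \<Rightarrow> 'a::ab_group_add set" where
  "Gk k = {x. nmul (2^k) x = 0}"

text \<open>The layer quotient P_k(G) = G_k / (G_{k-1} + 2 G_{k+1}) as a set of cosets.\<close>
definition Pk :: "nat \<Rightarrow> 'a::ab_group_add set set" where
  "Pk k = (\<lambda>x. (\<lambda>y. x + y) ` {a + nmul 2 b | a b. a \<in> Gk (k - 1) \<and> b \<in> Gk (k + 1)}) ` Gk k"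

text \<open>b_k(x,y) = 2^k lam(x,y) mod 2, computed on representatives in G_k (value in {0,1}).\<close>
definition bk :: "('a \<Rightarrow> 'a \<Rightarrow> rat) \<Rightarrow> nat \<Rightarrow> 'a \<Rightarrow> 'a \<Rightarrow> rat" where
  "bk lam k x y = (2^k * lam x y) - 2 * of_int \<lfloor>(2^k * lam x y) / 2\<rfloor>"

definition bk_alternating :: "('a::ab_group_add \<Rightarrow> 'a \<Rightarrow> rat) \<Rightarrow> nat \<Rightarrow> bool" where
  "bk_alternating lam k \<longleftrightarrow> (\<forall>X\<in>Pk k. \<forall>x\<in>X. bk lam k x x = 0)"

definition Hk :: "nat \<Rightarrow> 'a::ab_group_add set set" where
  "Hk k = range (\<lambda>x. (\<lambda>y. x + y) ` Gk k)"

definition qk :: "('a \<Rightarrow> 'a \<Rightarrow> rat) \<Rightarrow> nat \<Rightarrow> 'a set \<Rightarrow> rat" where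
  "qk lam k X = (let x = (SOME x. x \<in> X) in 2^(k-1) * lam x x)"

definition gammak :: "('a::{finite,ab_group_add} \<Rightarrow> 'a \<Rightarrow> rat) \<Rightarrow> nat \<Rightarrow> complex" where
  "gammak lam k = complex_of_real (1 / sqrt (real (card (Hk k :: 'a set set)))) *
     (\<Sum>X\<in>Hk k. exp (2 * pi * \<i> * complex_of_real (real_of_rat (qk lam k X))))"

definition uk :: "('a::{finite,ab_group_add} \<Rightarrow> 'a \<Rightarrow> rat) \<Rightarrow> nat \<Rightarrow> int" where
  "uk lam k = (SOME u. u \<in> {0..7} \<and> gammak lam k = exp (pi * \<i> * of_int u / 4))"

end

theory Submission
  imports Defs
begin

text \<open>The function \<open>q x = 2\<^sup>k\<^sup>-\<^sup>1 \<lambda>(x, x)\<close> is a quadratic refinement, modulo \<open>\<int>\<close>, of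
  the symmetric form \<open>b x y = 2\<^sup>k \<lambda>(x, y)\<close>; its radical is \<open>G\<^sub>k\<close>, and \<open>b\<^sub>k\<close> is
  alternating exactly when \<open>q\<close> vanishes on \<open>G\<^sub>k\<close>. Summing over the cosets of \<open>G\<^sub>k\<close> gives
  \<open>\<gamma>\<^sub>k = S / sqrt (|G| |G\<^sub>k|)\<close> for the Gauss sum \<open>S = \<Sum>\<^sub>x e(q x)\<close>.

  For a finite 2-group \<open>L\<close> on whose radical \<open>q\<close> vanishes, \<open>S(L)\<close> is an eighth root of unity
  times \<open>sqrt (|L| |rad L|)\<close>, by induction on \<open>|L|\<close>. If \<open>L\<close> is not its own radical, some
  element outside the radical has order 2 or 4 modulo it. An isotropic one of order 2 can be
  discarded: its orthogonal complement has the same Gauss sum and a radical twice as large.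
  Otherwise such elements span orthogonal summands of rank one or two, which split off with Gauss
  sums \<open>1 \<plusminus> i\<close>, \<open>2 e(q y)\<close> or \<open>-2\<close>. Gauss sums multiply under orthogonal sums, hence so does
  \<open>\<gamma>\<^sub>k\<close>, and the exponents \<open>u\<^sub>k\<close> of eighth roots of unity add modulo 8.\<close>

section \<open>Rational numbers modulo the integers\<close>

definition e2pi :: "rat \<Rightarrow> complex" where
  "e2pi t = exp (2 * pi * \<i> * complex_of_real (real_of_rat t))"

lemma e2pi_add: "e2pi (s + t) = e2pi s * e2pi t"
  unfolding e2pi_def by (simp add: of_rat_add distrib_left exp_add)

lemma e2pi_eq_cis: "e2pi t = cis (2 * pi * real_of_rat t)"
  unfolding e2pi_def cis_conv_exp by (simp add: mult_ac)

lemma e2pi_Ints: "t \<in> \<int> \<Longrightarrow> e2pi t = 1"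
  unfolding e2pi_eq_cis by (auto elim!: Ints_cases)

lemma e2pi_half: "e2pi (1/2) = -1"
  unfolding e2pi_def by (simp add: of_rat_divide)

lemma e2pi_quarter: "e2pi (1/4) = \<i>"
  unfolding e2pi_eq_cis by (simp add: of_rat_divide complex_eq_iff)

lemma e2pi_three_quarters: "e2pi (3/4) = -\<i>"
  using e2pi_add[of "1/2" "1/4"] by (simp add: e2pi_half e2pi_quarter)

lemma e2pi_power: "e2pi t ^ n = e2pi (of_nat n * t)"
  by (induction n) (simp_all add: e2pi_Ints e2pi_add[symmetric] algebra_simps)

definition cong_Ints :: "rat \<Rightarrow> rat \<Rightarrow> bool" (infix "\<doteq>" 50) where
  "a \<doteq> b \<longleftrightarrow> a - b \<in> \<int>"

lemma cong_Ints_refl [simp]: "a \<doteq> a"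
  by (simp add: cong_Ints_def)

lemma cong_Ints_sym: "a \<doteq> b \<Longrightarrow> b \<doteq> a"
  unfolding cong_Ints_def using Ints_minus[of "a - b"] by simp

lemma cong_Ints_trans [trans]: "a \<doteq> b \<Longrightarrow> b \<doteq> c \<Longrightarrow> a \<doteq> c"
  unfolding cong_Ints_def using Ints_add[of "a - b" "b - c"] by simp

lemma cong_Ints_add: "a \<doteq> a' \<Longrightarrow> b \<doteq> b' \<Longrightarrow> a + b \<doteq> a' + b'"
  unfolding cong_Ints_def using Ints_add[of "a - a'" "b - b'"] by (simp add: add_diff_add)

lemma cong_Ints_minus: "a \<doteq> a' \<Longrightarrow> - a \<doteq> - a'"
  unfolding cong_Ints_def using Ints_minus[of "a - a'"] by simp

lemma cong_Ints_diff: "a \<doteq> a' \<Longrightarrow> b \<doteq> b' \<Longrightarrow> a - b \<doteq> a' - b'"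
  using cong_Ints_add[of a a' "- b" "- b'"] cong_Ints_minus by simp

lemma cong_Ints_mult: "c \<in> \<int> \<Longrightarrow> a \<doteq> a' \<Longrightarrow> c * a \<doteq> c * a'"
  unfolding cong_Ints_def using Ints_mult[of c "a - a'"] by (simp add: right_diff_distrib)

lemma cong_Ints_Ints_iff: "a \<doteq> b \<Longrightarrow> a \<in> \<int> \<longleftrightarrow> b \<in> \<int>"
  unfolding cong_Ints_def using Ints_diff[of a "a - b"] Ints_add[of "a - b" b] by auto

lemma cong_Ints_Ints: "a \<doteq> b \<Longrightarrow> b \<in> \<int> \<Longrightarrow> a \<in> \<int>"
  using cong_Ints_Ints_iff by blast

lemma cong_Ints_zero_iff: "a \<doteq> 0 \<longleftrightarrow> a \<in> \<int>"
  by (simp add: cong_Ints_def)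

lemma cong_Ints_add_Ints: "x \<in> \<int> \<Longrightarrow> a \<doteq> c + x \<longleftrightarrow> a \<doteq> c"
  unfolding cong_Ints_def using Ints_add[of "a - (c + x)" x] Ints_diff[of "a - c" x]
  by (auto simp: algebra_simps)

lemma e2pi_cong: "a \<doteq> b \<Longrightarrow> e2pi a = e2pi b"
  unfolding cong_Ints_def using e2pi_add[of "a - b" b] by (simp add: e2pi_Ints)

lemma half_not_Ints: "(1/2 :: rat) \<notin> \<int>"
proof
  assume "(1/2 :: rat) \<in> \<int>"
  then obtain n where "(1/2 :: rat) = of_int n" by (auto elim: Ints_cases)
  then have "(1 :: int) = 2 * n" by (simp add: field_simps flip: of_int_eq_iff)
  then show False by presburger
qed

lemma cong_half_not_Ints: "a \<doteq> 1/2 \<Longrightarrow> a \<notin> \<int>"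
  using cong_Ints_Ints_iff half_not_Ints by blast

lemma cong_half_of_double_Ints:
  assumes "2 * a \<in> \<int>" "a \<notin> \<int>"
  shows "a \<doteq> 1/2"
proof -
  from assms(1) obtain n where n: "2 * a = of_int n" by (auto elim: Ints_cases)
  have "odd n"
    using assms(2) n by (auto elim!: evenE simp: field_simps)
  then obtain m where "n = 2 * m + 1" by (auto elim: oddE)
  then have "a - 1/2 = of_int m" using n by (simp add: field_simps)
  then show ?thesis unfolding cong_Ints_def by simp
qed

lemma e2pi_cong_half: "t \<doteq> 1/2 \<Longrightarrow> e2pi t = -1"
  using e2pi_cong e2pi_half by metis

lemma e2pi_eq_pm_i:
  assumes "2 * t \<doteq> 1/2"
  shows "e2pi t = \<i> \<or> e2pi t = -\<i>"
proof -
  have "2 * (t - 1/4) \<in> \<int>" using assms by (simp add: cong_Ints_def algebra_simps)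
  then have "t - 1/4 \<in> \<int> \<or> t - 1/4 \<doteq> 1/2" using cong_half_of_double_Ints by blast
  then have "t \<doteq> 1/4 \<or> t \<doteq> 3/4" by (auto simp: cong_Ints_def algebra_simps)
  then show ?thesis using e2pi_cong e2pi_quarter e2pi_three_quarters by metis
qed

lemma one_plus_pm_i_div_sqrt2_root8:
  assumes "z = \<i> \<or> z = -\<i>"
  shows "((1 + z) / complex_of_real (sqrt 2)) ^ 8 = 1"
proof -
  have sqrt2: "complex_of_real (sqrt 2) * complex_of_real (sqrt 2) = 2"
    by (simp flip: of_real_mult)
  have "((1 + z) / complex_of_real (sqrt 2)) ^ 2 = z"
    using assms by (auto simp: power_divide sqrt2 power2_eq_square algebra_simps)
  then have "((1 + z) / complex_of_real (sqrt 2)) ^ 8 = z ^ 4"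
    by (metis power_mult num_double numeral_times_numeral)
  then show ?thesis using assms by auto
qed

section \<open>Subgroups and multiples\<close>

definition add_subgroup :: "'a::ab_group_add set \<Rightarrow> bool" where
  "add_subgroup L \<longleftrightarrow> 0 \<in> L \<and> (\<forall>x\<in>L. \<forall>y\<in>L. x + y \<in> L) \<and> (\<forall>x\<in>L. - x \<in> L)"

lemma add_subgroup_zero: "add_subgroup L \<Longrightarrow> 0 \<in> L"
  by (simp add: add_subgroup_def)

lemma add_subgroup_add: "add_subgroup L \<Longrightarrow> x \<in> L \<Longrightarrow> y \<in> L \<Longrightarrow> x + y \<in> L"
  by (simp add: add_subgroup_def)

lemma add_subgroup_minus: "add_subgroup L \<Longrightarrow> x \<in> L \<Longrightarrow> - x \<in> L"
  by (simp add: add_subgroup_def)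

lemma add_subgroup_diff: "add_subgroup L \<Longrightarrow> x \<in> L \<Longrightarrow> y \<in> L \<Longrightarrow> x - y \<in> L"
  using add_subgroup_add[of L x "- y"] add_subgroup_minus[of L y] by simp

lemma bij_betw_add_assoc:
  fixes A :: "'a::semigroup_add set"
  assumes "bij_betw (\<lambda>(w, s). w + s) (A \<times> S) B" and "bij_betw (\<lambda>(w, t). w + t) (B \<times> T) C"
  shows "bij_betw (\<lambda>(w, p). w + (case p of (s, t) \<Rightarrow> s + t)) (A \<times> S \<times> T) C"
proof -
  have "bij_betw (\<lambda>(w, s, t). ((w, s), t)) (A \<times> S \<times> T) ((A \<times> S) \<times> T)"
    by (rule bij_betwI[where g = "\<lambda>((w, s), t). (w, s, t)"]) auto
  moreover have "bij_betw (map_prod (\<lambda>(w, s). w + s) id) ((A \<times> S) \<times> T) (B \<times> T)"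
    using assms(1) by (intro bij_betw_map_prod) simp_all
  ultimately have "bij_betw ((\<lambda>(w, t). w + t) \<circ> map_prod (\<lambda>(w, s). w + s) id \<circ> (\<lambda>(w, s, t). ((w, s), t)))
      (A \<times> S \<times> T) C"
    using assms(2) by (blast intro: bij_betw_trans)
  then show ?thesis
    by (rule bij_betw_cong[THEN iffD1, rotated]) (auto simp: add.assoc)
qed

lemma nmul_0 [simp]: "nmul 0 x = 0"
  by (simp add: nmul_def)

lemma nmul_Suc: "nmul (Suc n) x = nmul n x + x"
  by (simp add: nmul_def)

lemma nmul_add_left: "nmul (m + n) x = nmul m x + nmul n x"
  by (induction n) (simp_all add: nmul_Suc add.assoc)

lemma nmul_mult: "nmul (m * n) x = nmul m (nmul n x)"
  by (induction m) (simp_all add: nmul_Suc nmul_add_left add.commute)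

lemma nmul_two: "nmul 2 x = x + x"
  by (simp add: nmul_def numeral_2_eq_2)

lemma nmul_zero_right [simp]: "nmul n 0 = 0"
  by (simp add: nmul_def)

lemma nmul_add_right: "nmul n (x + y) = nmul n x + nmul n y"
  by (simp add: nmul_def sum.distrib)

lemma nmul_diff_right: "nmul n (x - y) = nmul n x - nmul n y"
  by (simp add: nmul_def sum_subtractf)

lemma nmul_Pair: "nmul n (x, y) = (nmul n x, nmul n y)"
  by (induction n) (simp_all add: nmul_Suc zero_prod_def)

section \<open>Gauss sums of quadratic refinements\<close>

locale quadratic_refinement =
  fixes q :: "'a::ab_group_add \<Rightarrow> rat" and b :: "'a \<Rightarrow> 'a \<Rightarrow> rat"
  assumes b_add_left: "b (x + y) z \<doteq> b x z + b y z"
    and b_sym: "b x y \<doteq> b y x"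
    and q_add: "q (x + y) \<doteq> q x + q y + b x y"
    and b_diag: "b x x \<doteq> 2 * q x"
begin

lemma b_add_right: "b x (y + z) \<doteq> b x y + b x z"
proof -
  have "b x (y + z) \<doteq> b (y + z) x" by (rule b_sym)
  also have "\<dots> \<doteq> b y x + b z x" by (rule b_add_left)
  also have "\<dots> \<doteq> b x y + b x z" by (intro cong_Ints_add b_sym)
  finally show ?thesis .
qed

lemma b_zero_left: "b 0 z \<in> \<int>"
  using b_add_left[of 0 0 z] by (simp add: cong_Ints_def)

lemma b_zero_right: "b z 0 \<in> \<int>"
  using b_zero_left cong_Ints_Ints_iff[OF b_sym[of z 0]] by simp

lemma q_zero: "q 0 \<in> \<int>"
proof -
  have "q 0 - (q 0 + q 0 + b 0 0) \<in> \<int>"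
    using q_add[of 0 0] by (simp add: cong_Ints_def)
  from Ints_diff[OF Ints_minus[OF this] b_zero_left[of 0]] show ?thesis by simp
qed

lemma b_Ints_commute: "b x y \<in> \<int> \<Longrightarrow> b y x \<in> \<int>"
  using cong_Ints_Ints_iff[OF b_sym[of x y]] by simp

lemma b_minus_right: "b z (- x) \<doteq> - b z x"
proof -
  have "b z x + b z (- x) \<doteq> b z 0" using b_add_right[of z x "- x"] by (simp add: cong_Ints_sym)
  then have "b z x + b z (- x) \<in> \<int>" using b_zero_right by (rule cong_Ints_Ints)
  then show ?thesis by (simp add: cong_Ints_def add.commute)
qed

lemma b_diff_right: "b z (x - y) \<doteq> b z x - b z y"
proof -
  have "b z (x - y) \<doteq> b z x + b z (- y)" using b_add_right[of z x "- y"] by simp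
  also have "\<dots> \<doteq> b z x + - b z y" by (intro cong_Ints_add b_minus_right cong_Ints_refl)
  finally show ?thesis by simp
qed

lemma b_diff_left: "b (x - y) z \<doteq> b x z - b y z"
proof -
  have "b (x - y) z \<doteq> b z (x - y)" by (rule b_sym)
  also have "\<dots> \<doteq> b z x - b z y" by (rule b_diff_right)
  also have "\<dots> \<doteq> b x z - b y z" by (intro cong_Ints_diff b_sym)
  finally show ?thesis .
qed

lemma b_double_left: "b (x + x) z \<doteq> 2 * b x z"
  using b_add_left[of x x z] by (simp only: mult_2)

lemma b_double_right: "b z (x + x) \<doteq> 2 * b z x"
  using b_add_right[of z x x] by (simp only: mult_2)

lemma q_double: "q (x + x) \<doteq> 4 * q x"
proof -
  have "q (x + x) \<doteq> q x + q x + b x x" by (rule q_add)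
  also have "\<dots> \<doteq> q x + q x + 2 * q x" by (intro cong_Ints_add b_diag cong_Ints_refl)
  also have "q x + q x + 2 * q x = 4 * q x" by simp
  finally show ?thesis .
qed

definition perp :: "'a set \<Rightarrow> 'a \<Rightarrow> 'a set" where
  "perp L v = {w \<in> L. b v w \<in> \<int>}"

definition radical :: "'a set \<Rightarrow> 'a set" where
  "radical L = {z \<in> L. \<forall>w\<in>L. b z w \<in> \<int>}"

definition gauss_sum :: "'a set \<Rightarrow> complex" where
  "gauss_sum L = (\<Sum>w\<in>L. e2pi (q w))"

lemma perp_subset: "perp L v \<subseteq> L"
  by (auto simp: perp_def)

lemma add_subgroup_perp:
  assumes "add_subgroup L"
  shows "add_subgroup (perp L v)"
proof -
  have "x + y \<in> perp L v" if "x \<in> perp L v" "y \<in> perp L v" for x y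
  proof -
    have "b v x + b v y \<in> \<int>" using that by (simp add: perp_def)
    then have "b v (x + y) \<in> \<int>" using cong_Ints_Ints_iff[OF b_add_right[of v x y]] by simp
    then show ?thesis using that add_subgroup_add[OF assms] by (auto simp: perp_def)
  qed
  moreover have "- x \<in> perp L v" if "x \<in> perp L v" for x
  proof -
    have "- b v x \<in> \<int>" using that by (simp add: perp_def)
    then have "b v (- x) \<in> \<int>" using cong_Ints_Ints_iff[OF b_minus_right[of v x]] by simp
    then show ?thesis using that add_subgroup_minus[OF assms] by (auto simp: perp_def)
  qed
  moreover have "0 \<in> perp L v"
    using assms add_subgroup_zero b_zero_right by (simp add: perp_def)
  ultimately show ?thesis unfolding add_subgroup_def by blast
qed

lemma radical_subset: "radical L \<subseteq> L"
  by (auto simp: radical_def)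

lemma radical_subset_perp: "v \<in> L \<Longrightarrow> radical L \<subseteq> perp L v"
  by (auto simp: radical_def perp_def intro: b_Ints_commute)

lemma zero_in_radical: "add_subgroup L \<Longrightarrow> 0 \<in> radical L"
  by (auto simp: radical_def add_subgroup_zero b_zero_left)

lemma radical_diff:
  assumes "add_subgroup L" "z \<in> radical L" "z' \<in> radical L"
  shows "z - z' \<in> radical L"
  using assms cong_Ints_Ints_iff[OF b_diff_left]
  by (auto simp: radical_def add_subgroup_diff)

lemma double_in_radical_half_Ints: "x + x \<in> radical L \<Longrightarrow> w \<in> L \<Longrightarrow> 2 * b x w \<in> \<int>"
  using cong_Ints_Ints_iff[OF b_double_left] by (auto simp: radical_def)

lemma orthogonal_split:
  assumes "K \<subseteq> L" "radical L \<subseteq> K" "finite K" "finite P"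
    and bij: "bij_betw (\<lambda>(w, p). w + \<phi> p) (K \<times> P) L"
    and orth: "\<And>w p. w \<in> K \<Longrightarrow> p \<in> P \<Longrightarrow> b w (\<phi> p) \<in> \<int>"
  shows "gauss_sum L = gauss_sum K * (\<Sum>p\<in>P. e2pi (q (\<phi> p)))"
    and "radical K = radical L"
proof -
  have "gauss_sum L = (\<Sum>(w, p)\<in>K \<times> P. e2pi (q (w + \<phi> p)))"
    unfolding gauss_sum_def using sum.reindex_bij_betw[OF bij, of "\<lambda>w. e2pi (q w)"]
    by (simp add: case_prod_unfold)
  also have "\<dots> = (\<Sum>(w, p)\<in>K \<times> P. e2pi (q w) * e2pi (q (\<phi> p)))"
  proof (rule sum.cong[OF refl], clarsimp)
    fix w p assume "w \<in> K" "p \<in> P"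
    then have "q (w + \<phi> p) \<doteq> q w + q (\<phi> p)"
      using q_add cong_Ints_add_Ints orth by blast
    then show "e2pi (q (w + \<phi> p)) = e2pi (q w) * e2pi (q (\<phi> p))"
      by (simp add: e2pi_cong e2pi_add)
  qed
  also have "\<dots> = gauss_sum K * (\<Sum>p\<in>P. e2pi (q (\<phi> p)))"
    by (simp add: gauss_sum_def sum_product sum.cartesian_product)
  finally show "gauss_sum L = gauss_sum K * (\<Sum>p\<in>P. e2pi (q (\<phi> p)))" .
  have "b z w \<in> \<int>" if z: "z \<in> radical K" and w: "w \<in> L" for z w
  proof -
    have "w \<in> (\<lambda>(w, p). w + \<phi> p) ` (K \<times> P)" using w bij by (simp add: bij_betw_def)
    then obtain w' p where w': "w' \<in> K" "p \<in> P" "w = w' + \<phi> p" by auto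
    have "b z w' \<in> \<int>" "b z (\<phi> p) \<in> \<int>"
      using z w' orth b_Ints_commute by (auto simp: radical_def)
    then show ?thesis unfolding w'(3) by (intro cong_Ints_Ints[OF b_add_right] Ints_add)
  qed
  then show "radical K = radical L"
    using assms(1,2) by (auto simp: radical_def)
qed

context
  fixes L v a
  assumes L: "add_subgroup L" and a: "a \<in> L"
    and half: "\<And>w. w \<in> L \<Longrightarrow> 2 * b v w \<in> \<int>" and va: "b v a \<doteq> 1/2"
begin

lemma half_split_cover:
  assumes "w \<in> L" "w \<notin> perp L v"
  shows "w - a \<in> perp L v"
proof -
  have "b v w \<doteq> 1/2" using assms half cong_half_of_double_Ints by (auto simp: perp_def)
  then have "b v w - b v a \<doteq> 1/2 - 1/2" using va by (rule cong_Ints_diff)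
  then have "b v w - b v a \<in> \<int>" by (simp add: cong_Ints_zero_iff)
  then have "b v (w - a) \<in> \<int>" using cong_Ints_Ints_iff[OF b_diff_right[of v w a]] by simp
  then show ?thesis using assms(1) a L add_subgroup_diff by (auto simp: perp_def)
qed

lemma half_split_nonzero: "a \<noteq> 0"
  using va b_zero_right cong_half_not_Ints by blast

lemma add_half_notin_perp:
  assumes "w \<in> perp L v"
  shows "w + a \<notin> perp L v"
proof -
  have "b v w \<doteq> 0" using assms by (simp add: perp_def cong_Ints_zero_iff)
  then have "b v (w + a) \<doteq> 0 + 1/2"
    using b_add_right cong_Ints_add[OF _ va] cong_Ints_trans by blast
  then show ?thesis using cong_half_not_Ints by (simp add: perp_def)
qed

lemma bij_betw_half_split: "bij_betw (\<lambda>(w, s). w + s) (perp L v \<times> {0, a}) L"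
  unfolding bij_betw_def
proof
  show "inj_on (\<lambda>(w, s). w + s) (perp L v \<times> {0, a})"
  proof (rule inj_onI, clarify)
    fix w s w' s'
    assume w: "w \<in> perp L v" "w' \<in> perp L v" and s: "s \<in> {0, a}" "s' \<in> {0, a}"
      and eq: "w + s = w' + s'"
    have "s = s'"
    proof (rule ccontr)
      assume "s \<noteq> s'"
      then have "s = 0 \<and> s' = a \<or> s = a \<and> s' = 0" using s by blast
      then have "w = w' + a \<or> w' = w + a" using eq by auto
      then show False using w add_half_notin_perp by blast
    qed
    then show "w = w' \<and> s = s'" using eq by simp
  qed
  show "(\<lambda>(w, s). w + s) ` (perp L v \<times> {0, a}) = L"
  proof
    show "(\<lambda>(w, s). w + s) ` (perp L v \<times> {0, a}) \<subseteq> L"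
      using L a perp_subset add_subgroup_add by fastforce
    show "L \<subseteq> (\<lambda>(w, s). w + s) ` (perp L v \<times> {0, a})"
    proof
      fix w assume "w \<in> L"
      then consider "(w, 0) \<in> perp L v \<times> {0, a}" | "(w - a, a) \<in> perp L v \<times> {0, a}"
        using half_split_cover by blast
      then show "w \<in> (\<lambda>(w, s). w + s) ` (perp L v \<times> {0, a})"
        by cases (force intro: image_eqI)+
    qed
  qed
qed

lemma card_half_split: "finite L \<Longrightarrow> card L = 2 * card (perp L v)"
  using bij_betw_same_card[OF bij_betw_half_split] half_split_nonzero
  by (simp add: card_cartesian_product)

end

text \<open>Translating by \<open>x\<close> multiplies \<open>e(q w)\<close> by \<open>e(b w x) = \<plusminus>1\<close>, so the terms
  off the orthogonal complement of \<open>x\<close> cancel in pairs.\<close>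

lemma gauss_sum_perp_isotropic:
  assumes L: "add_subgroup L" "finite L" and x: "x \<in> L" "x + x \<in> radical L" "q x \<in> \<int>"
  shows "gauss_sum (perp L x) = gauss_sum L"
proof -
  have "bij_betw (\<lambda>w. w + x) L L"
    by (rule bij_betwI[where g = "\<lambda>w. w - x"]) (use L x in \<open>auto simp: add_subgroup_add add_subgroup_diff\<close>)
  then have shift: "gauss_sum L = (\<Sum>w\<in>L. e2pi (q (w + x)))"
    unfolding gauss_sum_def by (rule sum.reindex_bij_betw[symmetric])
  have pair: "e2pi (q w) + e2pi (q (w + x)) = (if w \<in> perp L x then 2 * e2pi (q w) else 0)"
    if w: "w \<in> L" for w
  proof -
    have "q (w + x) \<doteq> (q w + b w x) + q x" using q_add[of w x] by (simp add: algebra_simps)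
    then have "e2pi (q (w + x)) = e2pi (q w) * e2pi (b w x)"
      using x(3) by (simp add: cong_Ints_add_Ints e2pi_cong e2pi_add)
    moreover have "e2pi (b w x) = (if w \<in> perp L x then 1 else -1)"
    proof (cases "w \<in> perp L x")
      case True
      then show ?thesis by (simp add: perp_def b_Ints_commute e2pi_Ints)
    next
      case False
      then have "b x w \<doteq> 1/2"
        using w x(2) double_in_radical_half_Ints cong_half_of_double_Ints by (auto simp: perp_def)
      then have "b w x \<doteq> 1/2" using b_sym cong_Ints_trans by blast
      then show ?thesis using False by (simp add: e2pi_cong[of _ "1/2"] e2pi_half)
    qed
    ultimately show ?thesis by simp
  qed
  have "2 * gauss_sum L = gauss_sum L + gauss_sum L" by (rule mult_2)
  also have "\<dots> = (\<Sum>w\<in>L. e2pi (q w) + e2pi (q (w + x)))"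
    using shift by (simp add: gauss_sum_def sum.distrib)
  also have "\<dots> = (\<Sum>w\<in>L. if w \<in> perp L x then 2 * e2pi (q w) else 0)"
    using pair by (rule sum.cong[OF refl])
  also have "\<dots> = 2 * gauss_sum (perp L x)"
    using sum.inter_restrict[OF L(2), of "\<lambda>w. 2 * e2pi (q w)" "perp L x"] perp_subset[of L x]
    by (simp add: gauss_sum_def sum_distrib_left Int_absorb1)
  finally show ?thesis by simp
qed

context
  fixes L x
  assumes L: "add_subgroup L" and x: "x \<in> L" "x \<notin> radical L" "x + x \<in> radical L" "q x \<in> \<int>"
begin

lemma b_isotropic_self: "b x x \<in> \<int>"
proof -
  have "2 * q x \<in> \<int>" using x(4) by simp
  then show ?thesis using b_diag by (rule cong_Ints_Ints[rotated])
qed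

lemma radical_perp_isotropic_subset: "radical (perp L x) \<subseteq> radical L \<union> (\<lambda>z. z + x) ` radical L"
proof
  obtain w0 where w0: "w0 \<in> L" "b x w0 \<notin> \<int>" using x(1,2) by (auto simp: radical_def)
  have half: "2 * b x w \<in> \<int>" if "w \<in> L" for w
    using double_in_radical_half_Ints[OF x(3) that] .
  have xw0: "b x w0 \<doteq> 1/2" using half w0 cong_half_of_double_Ints by blast
  have near: "b y w \<doteq> b y w0" if y: "\<forall>u\<in>perp L x. b y u \<in> \<int>" and w: "w \<in> L" "w \<notin> perp L x" for y w
  proof -
    have "w - w0 \<in> perp L x" using half_split_cover[OF L w0(1) half xw0 w] .
    then have "b y (w - w0) \<in> \<int>" using y by blast
    then show ?thesis using b_diff_right[of y w w0] by (simp add: cong_Ints_def)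
  qed
  fix z assume z: "z \<in> radical (perp L x)"
  then have zL: "z \<in> L" and zperp: "\<forall>u\<in>perp L x. b z u \<in> \<int>"
    by (auto simp: radical_def perp_def)
  show "z \<in> radical L \<union> (\<lambda>z. z + x) ` radical L"
  proof (cases "b z w0 \<in> \<int>")
    case True
    then have "\<forall>w\<in>L. b z w \<in> \<int>" using zperp near cong_Ints_Ints by blast
    then show ?thesis using zL by (simp add: radical_def)
  next
    case False
    have "w0 + w0 \<in> perp L x"
      using cong_Ints_Ints[OF b_double_right] half w0 L by (auto simp: perp_def add_subgroup_add)
    then have "2 * b z w0 \<in> \<int>" using zperp cong_Ints_Ints[OF cong_Ints_sym[OF b_double_right]] by blast
    then have zw0: "b z w0 \<doteq> 1/2" using False cong_half_of_double_Ints by blast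
    have "b (z - x) w \<in> \<int>" if w: "w \<in> L" for w
    proof (cases "w \<in> perp L x")
      case True
      then show ?thesis using zperp by (intro cong_Ints_Ints[OF b_diff_left] Ints_diff) (auto simp: perp_def)
    next
      case False
      have xperp: "\<forall>u\<in>perp L x. b x u \<in> \<int>" by (simp add: perp_def)
      have "b z w - b x w \<doteq> 1/2 - 1/2"
        using near[OF zperp w False] near[OF xperp w False] zw0 xw0
        by (intro cong_Ints_diff) (blast intro: cong_Ints_trans)+
      then show ?thesis by (intro cong_Ints_Ints[OF b_diff_left]) (simp add: cong_Ints_zero_iff)
    qed
    then have "z - x \<in> radical L" using zL x(1) L by (simp add: radical_def add_subgroup_diff)
    then show ?thesis by (intro UnI2 image_eqI[of _ _ "z - x"]) simp_all
  qed
qed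

lemma radical_perp_isotropic: "radical (perp L x) = radical L \<union> (\<lambda>z. z + x) ` radical L"
proof
  show "radical (perp L x) \<subseteq> radical L \<union> (\<lambda>z. z + x) ` radical L"
    by (rule radical_perp_isotropic_subset)
  have "z + x \<in> radical (perp L x)" if z: "z \<in> radical L" for z
  proof -
    have "b x z \<in> \<int>" using z x(1) b_Ints_commute by (auto simp: radical_def)
    then have "b x (z + x) \<in> \<int>"
      using b_isotropic_self by (intro cong_Ints_Ints[OF b_add_right] Ints_add)
    moreover have "b (z + x) u \<in> \<int>" if "u \<in> perp L x" for u
      using z that by (intro cong_Ints_Ints[OF b_add_left] Ints_add) (auto simp: radical_def perp_def)
    ultimately show ?thesis
      using z x(1) L by (auto simp: radical_def perp_def add_subgroup_add)
  qed
  moreover have "radical L \<subseteq> radical (perp L x)"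
    using radical_subset_perp[OF x(1)] by (auto simp: radical_def perp_def)
  ultimately show "radical L \<union> (\<lambda>z. z + x) ` radical L \<subseteq> radical (perp L x)" by blast
qed

lemma card_radical_perp_isotropic:
  assumes "finite L"
  shows "card (radical (perp L x)) = 2 * card (radical L)"
proof -
  have fin: "finite (radical L)" using assms radical_subset finite_subset by blast
  have "radical L \<inter> (\<lambda>z. z + x) ` radical L = {}"
    using radical_diff[OF L, of "_ + x"] x(2) by fastforce
  then have "card (radical (perp L x)) = card (radical L) + card ((\<lambda>z. z + x) ` radical L)"
    unfolding radical_perp_isotropic using fin by (simp add: card_Un_disjoint)
  also have "card ((\<lambda>z. z + x) ` radical L) = card (radical L)"
    by (rule card_image) (simp add: inj_on_def)
  finally show ?thesis by simp
qed

lemma q_Ints_radical_perp_isotropic: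
  assumes "\<forall>z\<in>radical L. q z \<in> \<int>"
  shows "\<forall>z\<in>radical (perp L x). q z \<in> \<int>"
proof -
  have "q (z + x) \<in> \<int>" if "z \<in> radical L" for z
    using that assms x(1,4) q_add[of z x]
    by (intro cong_Ints_Ints[OF q_add] Ints_add) (auto simp: radical_def)
  then show ?thesis using assms unfolding radical_perp_isotropic by blast
qed

end

section \<open>The Gauss sum of a finite 2-group\<close>

definition gauss_root8 :: "'a set \<Rightarrow> bool" where
  "gauss_root8 L \<longleftrightarrow>
     (\<exists>\<zeta>. \<zeta> ^ 8 = 1 \<and> gauss_sum L = \<zeta> * complex_of_real (sqrt (real (card L * card (radical L)))))"

definition gauss_reduction :: "'a set \<Rightarrow> 'a set \<Rightarrow> bool" where
  "gauss_reduction L L' \<longleftrightarrow> add_subgroup L' \<and> L' \<subseteq> L \<and> 2 * card L' \<le> card L \<and>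
     ((\<forall>z\<in>radical L. q z \<in> \<int>) \<longrightarrow> (\<forall>z\<in>radical L'. q z \<in> \<int>)) \<and>
     (\<exists>m d. m \<ge> 0 \<and> d ^ 8 = 1 \<and>
        gauss_sum L = complex_of_real (sqrt m) * d * gauss_sum L' \<and>
        real (card L * card (radical L)) = m * real (card L' * card (radical L')))"

lemma gauss_root8_radical:
  assumes "L \<subseteq> radical L" "\<forall>z\<in>radical L. q z \<in> \<int>"
  shows "gauss_root8 L"
proof -
  have L: "radical L = L" using assms(1) radical_subset by blast
  have "gauss_sum L = of_nat (card L)"
    unfolding gauss_sum_def using assms(2) L by (simp add: e2pi_Ints)
  then show ?thesis
    unfolding gauss_root8_def L by (intro exI[of _ 1]) (simp add: real_sqrt_mult)
qed

lemma gauss_root8_reduction: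
  assumes "gauss_reduction L L'" "gauss_root8 L'"
  shows "gauss_root8 L"
proof -
  obtain m d where m: "m \<ge> 0" "d ^ 8 = 1"
    and S: "gauss_sum L = complex_of_real (sqrt m) * d * gauss_sum L'"
    and c: "real (card L * card (radical L)) = m * real (card L' * card (radical L'))"
    using assms(1) unfolding gauss_reduction_def by blast
  obtain \<zeta> where \<zeta>: "\<zeta> ^ 8 = 1"
    "gauss_sum L' = \<zeta> * complex_of_real (sqrt (real (card L' * card (radical L'))))"
    using assms(2) unfolding gauss_root8_def by blast
  have "gauss_sum L = (d * \<zeta>) * complex_of_real (sqrt (real (card L * card (radical L))))"
    unfolding S \<zeta>(2) c using m(1) by (simp add: real_sqrt_mult mult_ac)
  moreover have "(d * \<zeta>) ^ 8 = 1" using m(2) \<zeta>(1) by (simp add: power_mult_distrib)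
  ultimately show ?thesis unfolding gauss_root8_def by blast
qed

lemma gauss_reduction_same_radical:
  assumes "add_subgroup L'" "L' \<subseteq> L" "radical L' = radical L" "card L = n * card L'" "n \<ge> 2"
    and "gauss_sum L = complex_of_real (sqrt (real n)) * d * gauss_sum L'" "d ^ 8 = 1"
  shows "gauss_reduction L L'"
  unfolding gauss_reduction_def
  using assms by (intro conjI exI[of _ "real n"] exI[of _ d]) (simp_all add: mult_right_mono)

lemma isotropic_reduction:
  assumes L: "add_subgroup L" "finite L"
    and x: "x \<in> L" "x \<notin> radical L" "x + x \<in> radical L" "q x \<in> \<int>"
  shows "gauss_reduction L (perp L x)"
proof -
  have half: "b x w \<doteq> 1/2" if "w \<in> L" "b x w \<notin> \<int>" for w
    using that double_in_radical_half_Ints[OF x(3)] cong_half_of_double_Ints by blast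
  obtain w0 where "w0 \<in> L" "b x w0 \<notin> \<int>" using x(1,2) by (auto simp: radical_def)
  then have "card L = 2 * card (perp L x)"
    using card_half_split[OF L(1) _ double_in_radical_half_Ints[OF x(3)] half L(2)] by blast
  moreover have "card (radical (perp L x)) = 2 * card (radical L)"
    using card_radical_perp_isotropic[OF L(1) x L(2)] .
  ultimately show ?thesis
    unfolding gauss_reduction_def
    using add_subgroup_perp[OF L(1)] perp_subset gauss_sum_perp_isotropic[OF L x(1,3,4)]
      q_Ints_radical_perp_isotropic[OF L(1) x]
    by (intro conjI exI[of _ 1] exI[of _ 1]) auto
qed

lemma rank_one_reduction:
  assumes L: "add_subgroup L" "finite L" and x: "x \<in> L" "x + x \<in> radical L" "b x x \<notin> \<int>"
  shows "gauss_reduction L (perp L x)"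
proof -
  note half = double_in_radical_half_Ints[OF x(2)]
  have xx: "b x x \<doteq> 1/2" using half x(1,3) cong_half_of_double_Ints by blast
  have fin: "finite (perp L x)" using L(2) perp_subset finite_subset by blast
  have orth: "b w p \<in> \<int>" if "w \<in> perp L x" "p \<in> {0, x}" for w p
    using that b_zero_right b_Ints_commute by (auto simp: perp_def)
  note split = orthogonal_split[OF perp_subset radical_subset_perp[OF x(1)] fin _
      bij_betw_half_split[OF L(1) x(1) half xx] orth]
  have "x \<noteq> 0" using half_split_nonzero[OF L(1) x(1) half xx] .
  then have "(\<Sum>p\<in>{0, x}. e2pi (q p)) = 1 + e2pi (q x)" by (simp add: e2pi_Ints q_zero)
  also have "\<dots> = complex_of_real (sqrt 2) * ((1 + e2pi (q x)) / complex_of_real (sqrt 2))"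
    by simp
  finally have "gauss_sum L = complex_of_real (sqrt (real 2)) * ((1 + e2pi (q x)) / complex_of_real (sqrt 2))
      * gauss_sum (perp L x)"
    using split(1) by (simp add: mult.commute)
  moreover have "2 * q x \<doteq> 1/2" using cong_Ints_trans[OF cong_Ints_sym[OF b_diag] xx] .
  then have "((1 + e2pi (q x)) / complex_of_real (sqrt 2)) ^ 8 = 1"
    by (intro one_plus_pm_i_div_sqrt2_root8 e2pi_eq_pm_i)
  ultimately show ?thesis
    using gauss_reduction_same_radical add_subgroup_perp[OF L(1)] perp_subset split(2)
      card_half_split[OF L(1) x(1) half xx L(2)] by blast
qed

lemma radical_subset_perp_perp:
  assumes "v \<in> L" "a \<in> L"
  shows "radical L \<subseteq> perp (perp L v) a"
proof
  fix z assume z: "z \<in> radical L"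
  then have "b z v \<in> \<int>" "b z a \<in> \<int>" using assms by (auto simp: radical_def)
  then show "z \<in> perp (perp L v) a"
    using z radical_subset b_Ints_commute[of z v] b_Ints_commute[of z a] by (auto simp: perp_def)
qed

lemma b_perp_perp_Ints:
  assumes "w \<in> perp (perp L v) a" "s \<in> {0, v}" "t \<in> {0, a}"
  shows "b w (s + t) \<in> \<int>"
proof -
  have "b v w \<in> \<int>" "b a w \<in> \<int>" using assms(1) by (auto simp: perp_def)
  then have "b w s \<in> \<int>" "b w t \<in> \<int>"
    using assms(2,3) b_zero_right b_Ints_commute[of v w] b_Ints_commute[of a w] by auto
  then show ?thesis by (intro cong_Ints_Ints[OF b_add_right] Ints_add)
qed

lemma rank_two_split:
  assumes L: "add_subgroup L" "finite L" and va: "v \<in> L" "a \<in> L"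
    and half_v: "\<And>w. w \<in> L \<Longrightarrow> 2 * b v w \<in> \<int>"
    and half_a: "\<And>w. w \<in> perp L v \<Longrightarrow> 2 * b a w \<in> \<int>"
    and "b v a \<doteq> 1/2" "b v v \<in> \<int>"
  shows "gauss_sum L = (1 + e2pi (q v) + e2pi (q a) + e2pi (q (v + a))) * gauss_sum (perp (perp L v) a)"
    and "radical (perp (perp L v) a) = radical L"
    and "card L = 4 * card (perp (perp L v) a)"
proof -
  define K where "K = perp (perp L v) a"
  have L1: "add_subgroup (perp L v)" "finite (perp L v)"
    using add_subgroup_perp[OF L(1)] finite_subset[OF perp_subset L(2)] .
  have v1: "v \<in> perp L v" using va \<open>b v v \<in> \<int>\<close> by (simp add: perp_def)
  have av: "b a v \<doteq> 1/2" using b_sym \<open>b v a \<doteq> 1/2\<close> cong_Ints_trans by blast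
  have K_sub: "K \<subseteq> L"
    unfolding K_def using perp_subset[of "perp L v" a] perp_subset[of L v] by (rule order_trans)
  have fin: "finite K" using finite_subset[OF K_sub L(2)] .
  have radK: "radical L \<subseteq> K"
    unfolding K_def using radical_subset_perp_perp[OF va] .
  have orth: "b w (case p of (s, t) \<Rightarrow> s + t) \<in> \<int>"
    if w: "w \<in> K" and p: "p \<in> {0, v} \<times> {0, a}" for w p
  proof -
    obtain s t where st: "p = (s, t)" "s \<in> {0, v}" "t \<in> {0, a}" using p by blast
    show ?thesis using b_perp_perp_Ints[OF w[unfolded K_def] st(2,3)] st(1) by simp
  qed
  have bij: "bij_betw (\<lambda>(w, p). w + (case p of (s, t) \<Rightarrow> s + t)) (K \<times> {0, v} \<times> {0, a}) L"
    unfolding K_def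
    by (rule bij_betw_add_assoc[OF bij_betw_half_split[OF L1(1) v1 half_a av]
          bij_betw_half_split[OF L(1) va(2) half_v \<open>b v a \<doteq> 1/2\<close>]])
  note split = orthogonal_split[OF K_sub radK fin _ bij orth]
  have "v \<noteq> 0" "a \<noteq> 0"
    using half_split_nonzero[OF L1(1) v1 half_a av] half_split_nonzero[OF L(1) va(2) half_v \<open>b v a \<doteq> 1/2\<close>]
    by simp_all
  then have "(\<Sum>p\<in>{0, v} \<times> {0, a}. e2pi (q (case p of (s, t) \<Rightarrow> s + t)))
      = 1 + e2pi (q v) + e2pi (q a) + e2pi (q (v + a))"
    by (simp add: sum.cartesian_product[symmetric] e2pi_Ints q_zero algebra_simps)
  then show "gauss_sum L = (1 + e2pi (q v) + e2pi (q a) + e2pi (q (v + a))) * gauss_sum (perp (perp L v) a)"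
    using split(1) by (simp add: K_def mult.commute)
  show "radical (perp (perp L v) a) = radical L" using split(2) by (simp add: K_def)
  show "card L = 4 * card (perp (perp L v) a)"
    using card_half_split[OF L(1) va(2) half_v \<open>b v a \<doteq> 1/2\<close> L(2)]
      card_half_split[OF L1(1) v1 half_a av L1(2)] by simp
qed

lemma order_four_reduction:
  assumes L: "add_subgroup L" "finite L"
    and y: "y \<in> L" "y + y + y + y \<in> radical L" "2 * b y y \<notin> \<int>"
  shows "gauss_reduction L (perp (perp L (y + y)) y)"
proof -
  define v where "v = y + y"
  have v: "v \<in> L" "v + v \<in> radical L" using L y by (simp_all add: v_def add_subgroup_add add.assoc)
  note half_v = double_in_radical_half_Ints[OF v(2)]
  have vw: "b v w \<doteq> 2 * b y w" for w unfolding v_def by (rule b_double_left)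
  have "2 * b v y \<doteq> 2 * (2 * b y y)" by (intro cong_Ints_mult vw) simp
  then have "2 * (2 * b y y) \<in> \<int>" using half_v[OF y(1)] cong_Ints_Ints cong_Ints_sym by blast
  then have yy: "2 * b y y \<doteq> 1/2" using y(3) cong_half_of_double_Ints by blast
  have vy: "b v y \<doteq> 1/2" using vw yy cong_Ints_trans by blast
  have half_y: "2 * b y w \<in> \<int>" if "w \<in> perp L v" for w
    using that cong_Ints_Ints[OF cong_Ints_sym[OF vw]] by (simp add: perp_def)
  have "b v v \<doteq> 2 * b v y" unfolding v_def by (rule b_double_right)
  also have "\<dots> \<doteq> 2 * (1/2)" using vy by (intro cong_Ints_mult) simp_all
  finally have vv: "b v v \<in> \<int>" by (rule cong_Ints_Ints) simp
  note split = rank_two_split[OF L v(1) y(1) half_v half_y vy vv]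
  have "4 * q y = 2 * (2 * q y)" by simp
  also have "\<dots> \<doteq> 2 * b y y" by (intro cong_Ints_mult cong_Ints_sym[OF b_diag]) simp
  finally have qy: "4 * q y \<doteq> 1/2" using yy cong_Ints_trans by blast
  have qv: "e2pi (q v) = -1"
    unfolding v_def using cong_Ints_trans[OF q_double qy] by (rule e2pi_cong_half)
  have "e2pi (q (v + y)) = e2pi (q v) * e2pi (q y) * e2pi (b v y)"
    using q_add[of v y] by (simp add: e2pi_cong e2pi_add)
  then have qvy: "e2pi (q (v + y)) = e2pi (q y)"
    using qv vy by (simp add: e2pi_cong[OF vy] e2pi_half)
  have "(8 :: rat) * q y = 2 * (4 * q y)" by simp
  also have "\<dots> \<doteq> 2 * (1/2)" using qy by (intro cong_Ints_mult) simp_all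
  finally have "8 * q y \<in> \<int>" by (rule cong_Ints_Ints) simp
  then have "e2pi (q y) ^ 8 = 1" by (simp add: e2pi_power e2pi_Ints)
  moreover have "gauss_sum L = complex_of_real (sqrt (real 4)) * e2pi (q y) * gauss_sum (perp (perp L v) y)"
    using split(1) qv qvy by (simp add: real_sqrt_four)
  ultimately show ?thesis
    unfolding v_def[symmetric]
    using split(2,3) perp_subset[of "perp L v" y] perp_subset[of L v]
    by (intro gauss_reduction_same_radical add_subgroup_perp L(1)) auto
qed

lemma hyperbolic_reduction:
  assumes L: "add_subgroup L" "finite L" and "x \<in> L" "y \<in> L"
    and "x + x \<in> radical L" "y + y \<in> radical L"
    and "q x \<doteq> 1/2" "q y \<doteq> 1/2" "b x y \<doteq> 1/2" "b x x \<in> \<int>"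
  shows "gauss_reduction L (perp (perp L x) y)"
proof -
  have half_y: "2 * b y w \<in> \<int>" if "w \<in> perp L x" for w
    using double_in_radical_half_Ints[OF \<open>y + y \<in> radical L\<close>] that perp_subset by blast
  note split = rank_two_split[OF L \<open>x \<in> L\<close> \<open>y \<in> L\<close> double_in_radical_half_Ints[OF \<open>x + x \<in> radical L\<close>]
      half_y \<open>b x y \<doteq> 1/2\<close> \<open>b x x \<in> \<int>\<close>]
  have qx: "e2pi (q x) = -1" and qy: "e2pi (q y) = -1" and bxy: "e2pi (b x y) = -1"
    using assms(7-9) by (simp_all add: e2pi_cong_half e2pi_cong[of _ "1/2"] e2pi_half)
  have "e2pi (q (x + y)) = -1"
    using q_add[of x y] qx qy bxy by (simp add: e2pi_cong e2pi_add)
  then have S: "gauss_sum L = complex_of_real (sqrt (real 4)) * (-1) * gauss_sum (perp (perp L x) y)"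
    using split(1) qx qy by (simp add: real_sqrt_four)
  have sub: "perp (perp L x) y \<subseteq> L"
    using perp_subset[of "perp L x" y] perp_subset[of L x] by (rule order_trans)
  show ?thesis
    using gauss_reduction_same_radical[OF add_subgroup_perp[OF add_subgroup_perp[OF L(1)]] sub split(2,3) _ S]
    by simp
qed

text \<open>This is where the 2-group hypothesis enters: \<open>2\<^sup>n w\<close> lies in the radical, and the
  exponent is lowered one step at a time.\<close>

lemma double_in_radical:
  assumes L: "add_subgroup L" and tor: "\<forall>y\<in>L. \<exists>n. nmul (2 ^ n) y = 0"
    and no_isotropic: "\<And>x. x \<in> L \<Longrightarrow> x \<notin> radical L \<Longrightarrow> x + x \<in> radical L \<Longrightarrow> q x \<notin> \<int>"
    and no_order_four: "\<And>y. y \<in> L \<Longrightarrow> y + y + y + y \<in> radical L \<Longrightarrow> 2 * b y y \<in> \<int>"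
    and w: "w \<in> L"
  shows "w + w \<in> radical L"
proof -
  have halve: "u + u \<in> radical L" if u: "u \<in> L" "u + u + u + u \<in> radical L" for u
  proof (rule ccontr)
    assume "u + u \<notin> radical L"
    have "q (u + u) \<doteq> 2 * (2 * q u)" using q_double[of u] by simp
    also have "\<dots> \<doteq> 2 * b u u" by (intro cong_Ints_mult cong_Ints_sym[OF b_diag]) simp
    finally have "q (u + u) \<in> \<int>" using no_order_four[OF u] by (rule cong_Ints_Ints)
    then show False
      using no_isotropic[of "u + u"] u L \<open>u + u \<notin> radical L\<close> by (simp add: add_subgroup_add add.assoc)
  qed
  have doubling: "u + u \<in> radical L" if "u \<in> L" "nmul (2 ^ Suc n) u \<in> radical L" for n u
    using that
  proof (induction n arbitrary: u)
    case 0
    then show ?case by (simp add: nmul_two)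
  next
    case (Suc n)
    have "nmul (2 ^ Suc (Suc n)) u = nmul (2 ^ Suc n) (u + u)"
      using nmul_mult[of "2 ^ Suc n" 2 u] by (simp add: nmul_two mult.commute)
    then have "(u + u) + (u + u) \<in> radical L"
      using Suc L by (simp add: add_subgroup_add)
    then show ?case using halve Suc.prems(1) by (simp add: add.assoc)
  qed
  obtain n where n: "nmul (2 ^ n) w = 0" using tor w by blast
  show ?thesis
  proof (cases n)
    case 0
    then show ?thesis using n zero_in_radical[OF L] by (simp add: nmul_Suc)
  next
    case (Suc m)
    then show ?thesis using doubling[OF w, of m] n zero_in_radical[OF L] by simp
  qed
qed

text \<open>If no isotropic, rank-one or order-four reduction exists, every element has order at most
  two modulo the radical, and an \<open>x\<close> outside it together with a \<open>y\<close> pairing to \<open>1/2\<close> with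
  \<open>x\<close> span a hyperbolic plane.\<close>

lemma exists_gauss_reduction:
  assumes L: "add_subgroup L" "finite L" and tor: "\<forall>y\<in>L. \<exists>n. nmul (2 ^ n) y = 0"
    and "\<not> L \<subseteq> radical L"
  shows "\<exists>L'. gauss_reduction L L'"
proof (rule ccontr)
  assume none: "\<nexists>L'. gauss_reduction L L'"
  have no_isotropic: "q x \<notin> \<int>" if "x \<in> L" "x \<notin> radical L" "x + x \<in> radical L" for x
    using none isotropic_reduction[OF L that] by blast
  have no_rank_one: "b x x \<in> \<int>" if "x \<in> L" "x + x \<in> radical L" for x
    using none rank_one_reduction[OF L that] by blast
  have no_order_four: "2 * b y y \<in> \<int>" if "y \<in> L" "y + y + y + y \<in> radical L" for y
    using none order_four_reduction[OF L that] by blast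
  have double: "w + w \<in> radical L" if "w \<in> L" for w
    by (rule double_in_radical[OF L(1) tor]) (fact no_isotropic no_order_four that)+
  have q_half: "q w \<doteq> 1/2" if "w \<in> L" "w \<notin> radical L" for w
  proof -
    have "2 * q w \<in> \<int>"
      using cong_Ints_Ints[OF cong_Ints_sym[OF b_diag] no_rank_one[OF that(1) double[OF that(1)]]] .
    then show ?thesis using no_isotropic[OF that double[OF that(1)]] cong_half_of_double_Ints by blast
  qed
  obtain x where x: "x \<in> L" "x \<notin> radical L" using assms(4) by blast
  then obtain y where y: "y \<in> L" "b x y \<notin> \<int>" by (auto simp: radical_def)
  have xy: "b x y \<doteq> 1/2"
    using double_in_radical_half_Ints[OF double[OF x(1)] y(1)] y(2) by (rule cong_half_of_double_Ints)
  have "y \<notin> radical L" using x(1) y(2) b_Ints_commute[of y x] by (auto simp: radical_def)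
  then show False
    using none hyperbolic_reduction[OF L x(1) y(1) double[OF x(1)] double[OF y(1)]
        q_half[OF x] q_half[OF y(1)] xy no_rank_one[OF x(1) double[OF x(1)]]] by blast
qed

theorem gauss_root8_two_group:
  assumes "add_subgroup L" "finite L" "\<forall>y\<in>L. \<exists>n. nmul (2 ^ n) y = 0" "\<forall>z\<in>radical L. q z \<in> \<int>"
  shows "gauss_root8 L"
  using assms
proof (induction "card L" arbitrary: L rule: less_induct)
  case less
  show ?case
  proof (cases "L \<subseteq> radical L")
    case True
    then show ?thesis using gauss_root8_radical less.prems(4) by blast
  next
    case False
    then obtain L' where red: "gauss_reduction L L'"
      using exists_gauss_reduction less.prems(1-3) by blast
    then have L': "add_subgroup L'" "L' \<subseteq> L" "2 * card L' \<le> card L" "\<forall>z\<in>radical L'. q z \<in> \<int>"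
      using less.prems(4) by (auto simp: gauss_reduction_def)
    have "finite L'" using finite_subset[OF L'(2) less.prems(2)] .
    then have "card L' > 0" using add_subgroup_zero[OF L'(1)] card_gt_0_iff by blast
    then have "card L' < card L" using L'(3) by linarith
    then have "gauss_root8 L'"
      using less.hyps L' \<open>finite L'\<close> less.prems(3) by blast
    then show ?thesis using gauss_root8_reduction red by blast
  qed
qed

end

section \<open>The layer form \<open>b\<^sub>k\<close> and the invariant \<open>\<gamma>\<^sub>k\<close>\<close>

lemma linking_pairing_iff:
  "linking_pairing lam \<longleftrightarrow>
     (\<forall>x y z. lam (x + y) z \<doteq> lam x z + lam y z) \<and> (\<forall>x y z. lam x (y + z) \<doteq> lam x y + lam x z) \<and>
     (\<forall>x y. lam x y \<doteq> lam y x) \<and> (\<forall>x. (\<forall>y. lam x y \<in> \<int>) \<longrightarrow> x = 0)"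
  by (simp add: linking_pairing_def cong_Ints_def diff_diff_eq)

lemma linking_pairing_add_left: "linking_pairing lam \<Longrightarrow> lam (x + y) z \<doteq> lam x z + lam y z"
  by (simp add: linking_pairing_def cong_Ints_def diff_diff_eq)

lemma linking_pairing_add_right: "linking_pairing lam \<Longrightarrow> lam x (y + z) \<doteq> lam x y + lam x z"
  by (simp add: linking_pairing_def cong_Ints_def diff_diff_eq)

lemma linking_pairing_sym: "linking_pairing lam \<Longrightarrow> lam x y \<doteq> lam y x"
  by (simp add: linking_pairing_def cong_Ints_def)

lemma linking_pairing_nondegenerate: "linking_pairing lam \<Longrightarrow> (\<And>y. lam x y \<in> \<int>) \<Longrightarrow> x = 0"
  by (simp add: linking_pairing_def)

lemma linking_pairing_zero_left:
  assumes "linking_pairing lam"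
  shows "lam 0 z \<in> \<int>"
  using linking_pairing_add_left[OF assms, of 0 0 z] by (simp add: cong_Ints_def)

lemma linking_pairing_zero_right:
  assumes "linking_pairing lam"
  shows "lam z 0 \<in> \<int>"
  using linking_pairing_add_right[OF assms, of z 0 0] by (simp add: cong_Ints_def)

lemma linking_pairing_nmul_left:
  assumes "linking_pairing lam"
  shows "lam (nmul n z) w \<doteq> of_nat n * lam z w"
proof (induction n)
  case 0
  then show ?case using linking_pairing_zero_left[OF assms] by (simp add: cong_Ints_zero_iff)
next
  case (Suc n)
  have "lam (nmul n z + z) w \<doteq> lam (nmul n z) w + lam z w" by (rule linking_pairing_add_left[OF assms])
  also have "\<dots> \<doteq> of_nat n * lam z w + lam z w" by (intro cong_Ints_add Suc.IH cong_Ints_refl)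
  finally show ?case by (simp add: nmul_Suc algebra_simps)
qed

lemma cong_Ints_two_power_mult: "a \<doteq> b \<Longrightarrow> 2 ^ n * a \<doteq> 2 ^ n * b"
  by (rule cong_Ints_mult) simp_all

lemma linking_pairing_square:
  assumes "linking_pairing lam"
  shows "lam (x + y) (x + y) \<doteq> lam x x + lam y y + 2 * lam x y"
proof -
  note lp = linking_pairing_add_left[OF assms] linking_pairing_add_right[OF assms]
  have "lam (x + y) (x + y) \<doteq> lam x (x + y) + lam y (x + y)" by (rule lp(1))
  also have "\<dots> \<doteq> (lam x x + lam x y) + (lam y x + lam y y)" by (intro cong_Ints_add lp(2))
  also have "\<dots> \<doteq> (lam x x + lam x y) + (lam x y + lam y y)"
    by (intro cong_Ints_add linking_pairing_sym[OF assms] cong_Ints_refl)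
  finally show ?thesis by (simp add: algebra_simps)
qed

lemma quadratic_refinement_layer:
  assumes lp: "linking_pairing lam" and k: "k \<ge> 1"
  shows "quadratic_refinement (\<lambda>x. 2 ^ (k - 1) * lam x x) (\<lambda>x y. 2 ^ k * lam x y)"
proof
  have two_pow: "(2 :: rat) ^ k = 2 ^ (k - 1) * 2" using k by (simp flip: power_Suc2)
  fix x y z
  show "2 ^ k * lam (x + y) z \<doteq> 2 ^ k * lam x z + 2 ^ k * lam y z"
    using cong_Ints_two_power_mult[OF linking_pairing_add_left[OF lp]] by (simp add: distrib_left)
  show "2 ^ k * lam x y \<doteq> 2 ^ k * lam y x"
    using cong_Ints_two_power_mult[OF linking_pairing_sym[OF lp]] .
  show "2 ^ (k - 1) * lam (x + y) (x + y) \<doteq> 2 ^ (k - 1) * lam x x + 2 ^ (k - 1) * lam y y + 2 ^ k * lam x y"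
    using cong_Ints_two_power_mult[OF linking_pairing_square[OF lp], of "k - 1" x y]
    by (simp add: two_pow algebra_simps)
  show "2 ^ k * lam x x \<doteq> 2 * (2 ^ (k - 1) * lam x x)"
    by (simp add: two_pow mult_ac)
qed

lemma add_subgroup_Gk: "add_subgroup (Gk k)"
  unfolding add_subgroup_def Gk_def
  by (simp add: nmul_add_right nmul_diff_right[of _ 0, simplified])

lemma radical_layer:
  fixes lam :: "'a::{finite,ab_group_add} \<Rightarrow> 'a \<Rightarrow> rat"
  assumes lp: "linking_pairing lam" and k: "k \<ge> 1"
  shows "quadratic_refinement.radical (\<lambda>x y. 2 ^ k * lam x y) UNIV = Gk k"
proof -
  interpret Q: quadratic_refinement "\<lambda>x. 2 ^ (k - 1) * lam x x" "\<lambda>x y. 2 ^ k * lam x y"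
    using quadratic_refinement_layer[OF lp k] .
  have "2 ^ k * lam z w \<in> \<int> \<longleftrightarrow> lam (nmul (2 ^ k) z) w \<in> \<int>" for z w
    using cong_Ints_Ints_iff[OF linking_pairing_nmul_left[OF lp, of "2 ^ k" z w]] by simp
  moreover have "(\<forall>w. lam (nmul (2 ^ k) z) w \<in> \<int>) \<longleftrightarrow> nmul (2 ^ k) z = 0" for z
    using linking_pairing_nondegenerate[OF lp] linking_pairing_zero_left[OF lp] by auto
  ultimately show ?thesis by (auto simp: Q.radical_def Gk_def)
qed

lemma bk_eq_0_iff:
  assumes "k \<ge> 1"
  shows "bk lam k x y = 0 \<longleftrightarrow> 2 ^ (k - 1) * lam x y \<in> \<int>"
proof -
  obtain j where j: "k = Suc j" using assms by (cases k) auto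
  have half: "2 ^ k * lam x y / 2 = 2 ^ (k - 1) * lam x y" unfolding j by simp
  have "bk lam k x y = 2 * frac (2 ^ k * lam x y / 2)"
    by (simp add: bk_def frac_def algebra_simps)
  then have "bk lam k x y = 2 * frac (2 ^ (k - 1) * lam x y)" by (simp only: half)
  then show ?thesis by simp
qed

lemma Pk_subset_Gk:
  assumes "k \<ge> 1" "X \<in> Pk k"
  shows "X \<subseteq> Gk k"
proof
  fix x assume "x \<in> X"
  then obtain z a c where x: "x = z + (a + nmul 2 c)" "z \<in> Gk k" "a \<in> Gk (k - 1)" "c \<in> Gk (k + 1)"
    using assms(2) unfolding Pk_def by blast
  have "nmul (2 ^ k) a = nmul 2 (nmul (2 ^ (k - 1)) a)"
    using assms(1) nmul_mult[of 2 "2 ^ (k - 1)" a] by (simp flip: power_Suc)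
  moreover have "nmul (2 ^ k) (nmul 2 c) = nmul (2 ^ (k + 1)) c"
    using nmul_mult[of "2 ^ k" 2 c] by (simp add: mult.commute)
  ultimately show "x \<in> Gk k"
    using x by (simp add: Gk_def nmul_add_right)
qed

lemma bk_alternating_iff:
  fixes lam :: "'a::ab_group_add \<Rightarrow> 'a \<Rightarrow> rat"
  assumes "k \<ge> 1"
  shows "bk_alternating lam k \<longleftrightarrow> (\<forall>z\<in>Gk k. 2 ^ (k - 1) * lam z z \<in> \<int>)"
proof
  assume alt: "bk_alternating lam k"
  show "\<forall>z\<in>Gk k. 2 ^ (k - 1) * lam z z \<in> \<int>"
  proof
    fix z :: 'a assume z: "z \<in> Gk k"
    define N :: "'a set" where "N = {a + nmul 2 c | a c. a \<in> Gk (k - 1) \<and> c \<in> Gk (k + 1)}"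
    have "0 \<in> N"
      unfolding N_def Gk_def by (rule CollectI, rule exI[of _ 0], rule exI[of _ 0]) simp
    then have "z \<in> (\<lambda>y. z + y) ` N" by (rule rev_image_eqI) simp
    moreover have "(\<lambda>y. z + y) ` N \<in> Pk k" unfolding Pk_def N_def using z by (rule imageI)
    ultimately have "bk lam k z z = 0" using alt unfolding bk_alternating_def by blast
    then show "2 ^ (k - 1) * lam z z \<in> \<int>" by (simp only: bk_eq_0_iff[OF assms])
  qed
next
  assume vanish: "\<forall>z\<in>Gk k. 2 ^ (k - 1) * lam z z \<in> \<int>"
  show "bk_alternating lam k"
    unfolding bk_alternating_def
  proof (intro ballI)
    fix X and x :: 'a assume "X \<in> Pk k" "x \<in> X"
    then have "x \<in> Gk k" using Pk_subset_Gk[OF assms] by blast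
    then show "bk lam k x x = 0" using vanish by (intro bk_eq_0_iff[OF assms, THEN iffD2]) blast
  qed
qed

lemma sum_cosets:
  fixes G :: "'a::{finite,ab_group_add} set" and f :: "'a \<Rightarrow> 'b::comm_semiring_1"
  assumes G: "add_subgroup G" and f: "\<And>x g. g \<in> G \<Longrightarrow> f (x + g) = f x"
  shows "(\<Sum>x\<in>UNIV. f x) = of_nat (card G) * (\<Sum>X\<in>range (\<lambda>x. (+) x ` G). f (SOME x. x \<in> X))"
proof -
  define C where "C x = (+) x ` G" for x
  have C_iff: "y \<in> C x \<longleftrightarrow> y - x \<in> G" for x y
    unfolding C_def by (auto intro: rev_image_eqI[of "y - x"])
  have self: "x \<in> C x" for x using C_iff add_subgroup_zero[OF G] by simp
  have coset_eq: "C z = C x" if "z \<in> C x" for x z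
  proof -
    have zx: "z - x \<in> G" using that C_iff by blast
    have "y - z \<in> G \<longleftrightarrow> y - x \<in> G" for y
    proof -
      have "(y - z) + (z - x) = y - x" "(y - x) - (z - x) = y - z" by (simp_all add: algebra_simps)
      then show ?thesis
        using add_subgroup_add[OF G _ zx, of "y - z"] add_subgroup_diff[OF G _ zx, of "y - x"] by metis
    qed
    then show ?thesis by (auto simp: C_iff)
  qed
  have fiber: "{z. C z = C x} = C x" for x
    using self coset_eq by blast
  have "(\<Sum>x\<in>UNIV. f x) = (\<Sum>X\<in>range C. \<Sum>z\<in>{z. C z = X}. f z)"
    using sum.group[of UNIV "range C" C f] by simp
  also have "\<dots> = (\<Sum>X\<in>range C. of_nat (card G) * f (SOME x. x \<in> X))"
  proof (rule sum.cong[OF refl])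
    fix X assume "X \<in> range C"
    then obtain x where X: "X = C x" by blast
    have "(SOME z. z \<in> C x) \<in> C x" using self by (rule someI)
    then have some: "f (SOME z. z \<in> C x) = f x"
      using f[of "(SOME z. z \<in> C x) - x" x] C_iff by simp
    have "(\<Sum>z\<in>C x. f z) = (\<Sum>z\<in>C x. f x)"
      using f[of "_ - x" x] by (intro sum.cong) (auto simp: C_iff)
    also have "\<dots> = of_nat (card G) * f x"
      unfolding C_def by (simp add: card_image inj_on_def)
    finally show "(\<Sum>z\<in>{z. C z = X}. f z) = of_nat (card G) * f (SOME x. x \<in> X)"
      unfolding X fiber some .
  qed
  finally show ?thesis by (simp add: C_def sum_distrib_left)
qed

lemma gammak_eq_gauss_sum:
  fixes lam :: "'a::{finite,ab_group_add} \<Rightarrow> 'a \<Rightarrow> rat"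
  assumes lp: "linking_pairing lam" and k: "k \<ge> 1" and alt: "bk_alternating lam k"
  shows "gammak lam k = (\<Sum>x\<in>UNIV. e2pi (2 ^ (k - 1) * lam x x)) /
    complex_of_real (sqrt (real (CARD('a) * card (Gk k :: 'a set))))"
proof -
  interpret Q: quadratic_refinement "\<lambda>x. 2 ^ (k - 1) * lam x x" "\<lambda>x y. 2 ^ k * lam x y"
    by (rule quadratic_refinement_layer[OF lp k])
  define g where "g = card (Gk k :: 'a set)"
  define h where "h = card (Hk k :: 'a set set)"
  have invariant: "e2pi (2 ^ (k - 1) * lam (x + z) (x + z)) = e2pi (2 ^ (k - 1) * lam x x)"
    if "z \<in> Gk k" for x z
  proof -
    have "2 ^ (k - 1) * lam z z \<in> \<int>" using that alt by (simp add: bk_alternating_iff[OF k])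
    moreover have "z \<in> Q.radical UNIV" using that radical_layer[OF lp k] by simp
    then have "2 ^ k * lam z x \<in> \<int>" by (simp add: Q.radical_def)
    then have "2 ^ k * lam x z \<in> \<int>" by (rule Q.b_Ints_commute)
    ultimately show ?thesis
      using Q.q_add[of x z] by (intro e2pi_cong) (simp add: cong_Ints_add_Ints add.assoc)
  qed
  have sums: "(\<Sum>x\<in>UNIV. e2pi (2 ^ (k - 1) * lam x x)) = of_nat g * (\<Sum>X\<in>Hk k. e2pi (qk lam k X))"
    using sum_cosets[OF add_subgroup_Gk[of k] invariant] by (simp add: g_def Hk_def qk_def Let_def)
  have "CARD('a) = g * h"
    using sum_cosets[OF add_subgroup_Gk[of k], where f = "\<lambda>_. 1 :: nat"] by (simp add: g_def h_def Hk_def)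
  then have "real (CARD('a) * g) = (real g * real g) * real h" by simp
  then have sqrt_card: "sqrt (real (CARD('a) * g)) = real g * sqrt (real h)"
    by (simp only: real_sqrt_mult real_sqrt_mult_self abs_of_nat)
  have "g > 0" using add_subgroup_zero[OF add_subgroup_Gk] by (auto simp: g_def card_gt_0_iff)
  moreover have "gammak lam k = (\<Sum>X\<in>Hk k. e2pi (qk lam k X)) / complex_of_real (sqrt (real h))"
    by (simp add: gammak_def e2pi_def h_def divide_inverse mult.commute)
  ultimately show ?thesis
    unfolding sums g_def[symmetric] sqrt_card by simp
qed

lemma gammak_root8:
  fixes lam :: "'a::{finite,ab_group_add} \<Rightarrow> 'a \<Rightarrow> rat"
  assumes "two_group TYPE('a)" and lp: "linking_pairing lam" and k: "k \<ge> 1"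
    and alt: "bk_alternating lam k"
  shows "gammak lam k ^ 8 = 1"
proof -
  interpret Q: quadratic_refinement "\<lambda>x. 2 ^ (k - 1) * lam x x" "\<lambda>x y. 2 ^ k * lam x y"
    by (rule quadratic_refinement_layer[OF lp k])
  note radical = radical_layer[OF lp k]
  have "Q.gauss_root8 UNIV"
  proof (rule Q.gauss_root8_two_group)
    show "add_subgroup (UNIV :: 'a set)" by (simp add: add_subgroup_def)
    show "\<forall>y\<in>UNIV. \<exists>n. nmul (2 ^ n) (y :: 'a) = 0" using assms(1) by (simp add: two_group_def)
    show "\<forall>z\<in>Q.radical UNIV. 2 ^ (k - 1) * lam z z \<in> \<int>"
      using alt by (simp add: radical bk_alternating_iff[OF k])
  qed simp
  then obtain \<zeta> where \<zeta>: "\<zeta> ^ 8 = 1"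
    "Q.gauss_sum UNIV = \<zeta> * complex_of_real (sqrt (real (CARD('a) * card (Gk k :: 'a set))))"
    unfolding Q.gauss_root8_def radical by blast
  have "Q.gauss_sum UNIV = (\<Sum>x\<in>UNIV. e2pi (2 ^ (k - 1) * lam x x))"
    unfolding Q.gauss_sum_def ..
  moreover have "CARD('a) * card (Gk k :: 'a set) > 0"
    using add_subgroup_zero[OF add_subgroup_Gk] by (auto simp: card_gt_0_iff)
  ultimately have "gammak lam k = \<zeta>"
    using gammak_eq_gauss_sum[OF lp k alt] \<zeta>(2) add_subgroup_zero[OF add_subgroup_Gk, of k] by auto
  then show ?thesis using \<zeta>(1) by simp
qed

lemma eighth_root_of_unity_exp:
  fixes z :: complex
  assumes "z ^ 8 = 1"
  shows "\<exists>u::int. u \<in> {0..7} \<and> z = exp (complex_of_real pi * \<i> * of_int u / 4)"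
proof -
  obtain j :: nat where j: "j < 8" "z = exp (2 * of_real pi * \<i> * of_nat j / of_nat 8)"
    using assms complex_roots_unity[of 8] by auto
  then have "z = exp (complex_of_real pi * \<i> * of_int (int j) / 4)"
    by (simp add: mult_ac)
  then show ?thesis using j(1) by (intro exI[of _ "int j"]) auto
qed

lemma exp_pi_quarter_eq_imp_mod8:
  fixes a b :: int
  assumes "exp (complex_of_real pi * \<i> * of_int a / 4) = exp (complex_of_real pi * \<i> * of_int b / 4)"
  shows "a mod 8 = b mod 8"
proof -
  obtain n :: int where "complex_of_real pi * \<i> * of_int a / 4
      = complex_of_real pi * \<i> * of_int b / 4 + (of_int (2 * n) * pi) * \<i>"
    using assms exp_eq by blast
  then have "complex_of_real pi * \<i> * (of_int a - of_int b - 8 * of_int n) = 0"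
    by (simp add: field_simps)
  then have "(of_int (a - b - 8 * n) :: complex) = 0" by simp
  then have "a - b - 8 * n = 0" by (simp only: of_int_eq_0_iff)
  then show ?thesis by presburger
qed

lemma gammak_eq_exp_uk:
  assumes "gammak lam k ^ 8 = 1"
  shows "gammak lam k = exp (complex_of_real pi * \<i> * of_int (uk lam k) / 4)"
  using someI_ex[OF eighth_root_of_unity_exp[OF assms]] unfolding uk_def by blast

section \<open>Orthogonal sums\<close>

lemma orth_sum_Pair [simp]: "orth_sum lam lam' (a, b) (c, d) = lam a c + lam' b d"
  by (simp add: orth_sum_def)

lemma linking_pairing_orth_sum:
  assumes lp: "linking_pairing lam" and lp': "linking_pairing lam'"
  shows "linking_pairing (orth_sum lam lam')"
  unfolding linking_pairing_iff
proof (intro conjI allI impI)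
  fix x y z :: "'a \<times> 'b"
  show "orth_sum lam lam' (x + y) z \<doteq> orth_sum lam lam' x z + orth_sum lam lam' y z"
    using cong_Ints_add[OF linking_pairing_add_left[OF lp] linking_pairing_add_left[OF lp']]
    by (cases x, cases y, cases z) (simp add: add_ac)
  show "orth_sum lam lam' x (y + z) \<doteq> orth_sum lam lam' x y + orth_sum lam lam' x z"
    using cong_Ints_add[OF linking_pairing_add_right[OF lp] linking_pairing_add_right[OF lp']]
    by (cases x, cases y, cases z) (simp add: add_ac)
  show "orth_sum lam lam' x y \<doteq> orth_sum lam lam' y x"
    using cong_Ints_add[OF linking_pairing_sym[OF lp] linking_pairing_sym[OF lp']]
    by (cases x, cases y) simp
next
  fix x :: "'a \<times> 'b"
  assume ints: "\<forall>y. orth_sum lam lam' x y \<in> \<int>"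
  obtain x1 x2 where x: "x = (x1, x2)" by (cases x)
  have "lam x1 y1 \<in> \<int>" for y1
    using Ints_diff[OF ints[rule_format, of "(y1, 0)"] linking_pairing_zero_right[OF lp', of x2]] x by simp
  moreover have "lam' x2 y2 \<in> \<int>" for y2
    using Ints_diff[OF ints[rule_format, of "(0, y2)"] linking_pairing_zero_right[OF lp, of x1]] x by simp
  ultimately show "x = 0"
    using linking_pairing_nondegenerate[OF lp] linking_pairing_nondegenerate[OF lp'] x
    by (simp add: zero_prod_def)
qed

lemma nmul_two_power_add: "nmul (2 ^ n) x = 0 \<Longrightarrow> nmul (2 ^ (n + m)) x = 0"
  using nmul_mult[of "2 ^ m" "2 ^ n" x] by (simp add: power_add mult.commute)

lemma two_group_prod:
  assumes "two_group TYPE('a::{finite,ab_group_add})" "two_group TYPE('b::{finite,ab_group_add})"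
  shows "two_group TYPE('a \<times> 'b)"
  unfolding two_group_def
proof
  fix p :: "'a \<times> 'b"
  obtain a b where p: "p = (a, b)" by (cases p)
  obtain n m where "nmul (2 ^ n) a = 0" "nmul (2 ^ m) b = 0"
    using assms unfolding two_group_def by blast
  then have "nmul (2 ^ (n + m)) a = 0" "nmul (2 ^ (m + n)) b = 0"
    by (simp_all add: nmul_two_power_add)
  then show "\<exists>n. nmul (2 ^ n) p = 0" using p by (auto simp: nmul_Pair zero_prod_def add.commute)
qed

lemma Gk_prod: "Gk k = Gk k \<times> Gk k"
  by (auto simp: Gk_def nmul_Pair zero_prod_def)

lemma bk_alternating_orth_sum:
  fixes lam :: "'a::ab_group_add \<Rightarrow> 'a \<Rightarrow> rat" and lam' :: "'b::ab_group_add \<Rightarrow> 'b \<Rightarrow> rat"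
  assumes k: "k \<ge> 1" and "bk_alternating lam k" "bk_alternating lam' k"
  shows "bk_alternating (orth_sum lam lam') k"
  using assms unfolding bk_alternating_iff[OF k] Gk_prod
  by (auto simp: distrib_left)

lemma gammak_orth_sum:
  fixes lam :: "'a::{finite,ab_group_add} \<Rightarrow> 'a \<Rightarrow> rat" and lam' :: "'b::{finite,ab_group_add} \<Rightarrow> 'b \<Rightarrow> rat"
  assumes lp: "linking_pairing lam" "linking_pairing lam'" and k: "k \<ge> 1"
    and alt: "bk_alternating lam k" "bk_alternating lam' k"
  shows "gammak (orth_sum lam lam') k = gammak lam k * gammak lam' k"
proof -
  have "(\<Sum>p\<in>UNIV. e2pi (2 ^ (k - 1) * orth_sum lam lam' p p))
      = (\<Sum>x\<in>UNIV. e2pi (2 ^ (k - 1) * lam x x)) * (\<Sum>y\<in>UNIV. e2pi (2 ^ (k - 1) * lam' y y))"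
  proof -
    have "(\<Sum>p\<in>UNIV. e2pi (2 ^ (k - 1) * orth_sum lam lam' p p))
        = (\<Sum>(x, y)\<in>UNIV \<times> UNIV. e2pi (2 ^ (k - 1) * lam x x) * e2pi (2 ^ (k - 1) * lam' y y))"
      by (intro sum.cong) (auto simp: e2pi_add[symmetric] distrib_left)
    then show ?thesis by (simp only: sum.cartesian_product[symmetric] sum_product)
  qed
  moreover have "real (CARD('a \<times> 'b) * card (Gk k :: ('a \<times> 'b) set))
      = real (CARD('a) * card (Gk k :: 'a set)) * real (CARD('b) * card (Gk k :: 'b set))"
    by (simp add: Gk_prod card_cartesian_product)
  ultimately show ?thesis
    using gammak_eq_gauss_sum[OF linking_pairing_orth_sum[OF lp] k bk_alternating_orth_sum[OF k alt]]
      gammak_eq_gauss_sum[OF lp(1) k alt(1)] gammak_eq_gauss_sum[OF lp(2) k alt(2)]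
    by (simp add: real_sqrt_mult)
qed

theorem lemma5p15:
  fixes lam :: "'a::{finite,ab_group_add} \<Rightarrow> 'a \<Rightarrow> rat"
    and lam' :: "'b::{finite,ab_group_add} \<Rightarrow> 'b \<Rightarrow> rat"
    and k :: nat
  assumes "two_group TYPE('a)" and "two_group TYPE('b)"
    and "linking_pairing lam" and "linking_pairing lam'"
    and "k \<ge> 1"
    and "bk_alternating lam k" and "bk_alternating lam' k"
  shows "bk_alternating (orth_sum lam lam') k \<and>
         uk (orth_sum lam lam') k mod 8 = (uk lam k + uk lam' k) mod 8"
proof
  show alt: "bk_alternating (orth_sum lam lam') k"
    using bk_alternating_orth_sum assms(5-7) .
  have root8: "gammak lam k ^ 8 = 1" "gammak lam' k ^ 8 = 1" "gammak (orth_sum lam lam') k ^ 8 = 1"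
    using gammak_root8 assms two_group_prod linking_pairing_orth_sum alt by blast+
  have "exp (complex_of_real pi * \<i> * of_int (uk (orth_sum lam lam') k) / 4)
      = gammak lam k * gammak lam' k"
    using gammak_eq_exp_uk[OF root8(3)] gammak_orth_sum[OF assms(3-7)] by simp
  also have "\<dots> = exp (complex_of_real pi * \<i> * of_int (uk lam k + uk lam' k) / 4)"
    using gammak_eq_exp_uk[OF root8(1)] gammak_eq_exp_uk[OF root8(2)]
    by (simp add: exp_add[symmetric] add_divide_distrib distrib_left)
  finally show "uk (orth_sum lam lam') k mod 8 = (uk lam k + uk lam' k) mod 8"
    by (rule exp_pi_quarter_eq_imp_mod8)
qed

end
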